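(* In the simplified FaRMv2 protocol described in the context, let $T$ be a transaction with read timestamp $rts$, and let $R$ be an object in $T$'s read set which $T$ reads at version $v_R \le rts$. Then in this execution the object $R$ is never updated at a version (timestamp) lying in the interval $(v_R, rts)$.
   Context: Global time means the time at a distinguished clock master. Each machine has a local clock whose rate differs from that of global time by a relative factor of at most a known drift bound $\epsilon$. The function TIME() returns an interval $[L,U]$ such that the global time at the moment of the call lies in $[L,U]$. The function GET\_TS is: $[L,U] \gets \mathrm{TIME}()$; sleep for $(U-L)(1+\epsilon)$ units of local time; return $U$. The data consists of objects, each having a lock bit and a set of versions, each version tagged with a timestamp (the write timestamp of the transaction that wrote it). ReadAtTs$(R,ts)$: if $R$ is locked return NULL; otherwise return the version of $R$ with the highest timestamp $\le ts$, or NULL if none is available. LockAtTs$(R,ts)$: if $R$ is locked or $R$ has timestamp $\ge ts$ return NULL; otherwise lock $R$. A transaction with read set RSet and write set WSet executes ExecuteAndCommit(RSet, WSet): $rts \gets$ GET\_TS; for each $R\in$ RSet, if ReadAtTs$(R,rts)$ returns NULL then abort; if WSet is empty, commit (read-only transaction); otherwise for each $W\in$ WSet, if LockAtTs$(W,rts)$ returns NULL then abort; then $wts \gets$ GET\_TS (performed while holding the locks); then for each $R \in$ RSet $\setminus$ WSet, if $R$ is locked or $R$ has timestamp $> rts$, abort (validation failure); then install for each object in WSet a new version with timestamp $wts$, unlock all objects, and commit. Here $rts$ is the transaction's read timestamp and $wts$ its write timestamp; a version of an object written by a committed transaction carries that transaction's $wts$. *)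

theory Defs
  imports Main Complex_Main
begin

(* Global time is a real number ("now"); every atomic step happens at the
   current global time, and a Tick step lets global time advance.  The local clock of machine m is clk m : global time -> local time.
   TIME() returns any interval [L,U] containing the current global time.
   GET_TS = TIME() followed by a local sleep of (U-L)(1+eps); it returns U. *)

datatype phase =
    NotStarted
  | SleepR real real            (* rts = U, local wake-up deadline *)
  | Reading real                (* rts *)
  | Locking real                (* rts *)
  | SleepW real real real       (* rts, wts = U, local wake-up deadline *)
  | Validating real real        (* rts, wts *)
  | Committed
  | Aborted

record ('t, 'o) st =
  now    :: real
  owner  :: "'o \<Rightarrow> 't option"         (* lock bit (with lock holder) *)
  vers   :: "'o \<Rightarrow> real set"          (* timestamps of the versions of each object *)
  ph     :: "'t \<Rightarrow> phase"
  rts_of :: "'t \<Rightarrow> real option"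
  rd     :: "'t \<Rightarrow> 'o \<Rightarrow> real option"  (* version of R read by T (ReadAtTs result) *)

definition release :: "'t \<Rightarrow> ('o \<Rightarrow> 't option) \<Rightarrow> ('o \<Rightarrow> 't option)" where
  "release T own = (\<lambda>x. if own x = Some T then None else own x)"

definition init_st :: "('t, 'o) st \<Rightarrow> bool" where
  "init_st s \<longleftrightarrow> (\<forall>x. owner s x = None) \<and> (\<forall>x. finite (vers s x))
     \<and> (\<forall>T. ph s T = NotStarted) \<and> (\<forall>T. rts_of s T = None) \<and> (\<forall>T x. rd s T x = None)"

inductive step ::
  "real \<Rightarrow> ('m \<Rightarrow> real \<Rightarrow> real) \<Rightarrow> ('t \<Rightarrow> 'm) \<Rightarrow> ('t \<Rightarrow> 'o set) \<Rightarrow> ('t \<Rightarrow> 'o set)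
     \<Rightarrow> ('t, 'o) st \<Rightarrow> ('t, 'o) st \<Rightarrow> bool"
  for eps clk mach RS WS where
  tick: "t \<ge> now s \<Longrightarrow> step eps clk mach RS WS s (s\<lparr>now := t\<rparr>)"
| start: "\<lbrakk>ph s T = NotStarted; L \<le> now s; now s \<le> U\<rbrakk> \<Longrightarrow>
    step eps clk mach RS WS s
      (s\<lparr>ph := (ph s)(T := SleepR U (clk (mach T) (now s) + (U - L) * (1 + eps))),
         rts_of := (rts_of s)(T := Some U)\<rparr>)"
| wakeR: "\<lbrakk>ph s T = SleepR rts dl; clk (mach T) (now s) \<ge> dl\<rbrakk> \<Longrightarrow>
    step eps clk mach RS WS s (s\<lparr>ph := (ph s)(T := Reading rts)\<rparr>)"
| read_ok: "\<lbrakk>ph s T = Reading rts; R \<in> RS T; rd s T R = None; owner s R = None;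
      v \<in> vers s R; v \<le> rts; \<forall>w\<in>vers s R. w \<le> rts \<longrightarrow> w \<le> v\<rbrakk> \<Longrightarrow>
    step eps clk mach RS WS s (s\<lparr>rd := (rd s)(T := (rd s T)(R := Some v))\<rparr>)"
| read_fail: "\<lbrakk>ph s T = Reading rts; R \<in> RS T; rd s T R = None;
      owner s R \<noteq> None \<or> \<not> (\<exists>v\<in>vers s R. v \<le> rts)\<rbrakk> \<Longrightarrow>
    step eps clk mach RS WS s (s\<lparr>ph := (ph s)(T := Aborted)\<rparr>)"
| commit_ro: "\<lbrakk>ph s T = Reading rts; \<forall>R\<in>RS T. rd s T R \<noteq> None; WS T = {}\<rbrakk> \<Longrightarrow>
    step eps clk mach RS WS s (s\<lparr>ph := (ph s)(T := Committed)\<rparr>)"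
| to_lock: "\<lbrakk>ph s T = Reading rts; \<forall>R\<in>RS T. rd s T R \<noteq> None; WS T \<noteq> {}\<rbrakk> \<Longrightarrow>
    step eps clk mach RS WS s (s\<lparr>ph := (ph s)(T := Locking rts)\<rparr>)"
| lock_ok: "\<lbrakk>ph s T = Locking rts; W \<in> WS T; owner s W = None; \<forall>v\<in>vers s W. v < rts\<rbrakk> \<Longrightarrow>
    step eps clk mach RS WS s (s\<lparr>owner := (owner s)(W := Some T)\<rparr>)"
| lock_fail: "\<lbrakk>ph s T = Locking rts; W \<in> WS T; owner s W \<noteq> Some T;
      owner s W \<noteq> None \<or> (\<exists>v\<in>vers s W. v \<ge> rts)\<rbrakk> \<Longrightarrow>
    step eps clk mach RS WS s (s\<lparr>ph := (ph s)(T := Aborted), owner := release T (owner s)\<rparr>)"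
| startW: "\<lbrakk>ph s T = Locking rts; \<forall>W\<in>WS T. owner s W = Some T; L \<le> now s; now s \<le> U\<rbrakk> \<Longrightarrow>
    step eps clk mach RS WS s
      (s\<lparr>ph := (ph s)(T := SleepW rts U (clk (mach T) (now s) + (U - L) * (1 + eps)))\<rparr>)"
| wakeW: "\<lbrakk>ph s T = SleepW rts wts dl; clk (mach T) (now s) \<ge> dl\<rbrakk> \<Longrightarrow>
    step eps clk mach RS WS s (s\<lparr>ph := (ph s)(T := Validating rts wts)\<rparr>)"
| val_fail: "\<lbrakk>ph s T = Validating rts wts; R \<in> RS T - WS T;
      owner s R \<noteq> None \<or> (\<exists>v\<in>vers s R. v > rts)\<rbrakk> \<Longrightarrow>
    step eps clk mach RS WS s (s\<lparr>ph := (ph s)(T := Aborted), owner := release T (owner s)\<rparr>)"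
| commit: "\<lbrakk>ph s T = Validating rts wts;
      \<forall>R\<in>RS T - WS T. owner s R = None \<and> (\<forall>v\<in>vers s R. v \<le> rts)\<rbrakk> \<Longrightarrow>
    step eps clk mach RS WS s
      (s\<lparr>ph := (ph s)(T := Committed), owner := release T (owner s),
         vers := (\<lambda>x. if x \<in> WS T then insert wts (vers s x) else vers s x)\<rparr>)"

definition reachable ::
  "real \<Rightarrow> ('m \<Rightarrow> real \<Rightarrow> real) \<Rightarrow> ('t \<Rightarrow> 'm) \<Rightarrow> ('t \<Rightarrow> 'o set) \<Rightarrow> ('t \<Rightarrow> 'o set)
     \<Rightarrow> ('t, 'o) st \<Rightarrow> bool" where
  "reachable eps clk mach RS WS s \<longleftrightarrow>
     (\<exists>s0. init_st s0 \<and> (step eps clk mach RS WS)\<^sup>*\<^sup>* s0 s)"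

end

theory Submission
  imports Defs
begin

(* T reads only after the sleep in GET_TS, and by the drift bound (U - L)(1 + eps) units of
   local time last at least U - L units of global time, so global time has passed rts T by then.
   Hence every version that exists when T reads R and lies below rts T is at most the version
   vR that T reads.  If a transaction W installs a version of R after T's read, W holds the lock
   on R from its call of TIME() for wts W until its commit; R was unlocked when T read it, so
   that call comes after the read, and as its interval contains the global time of the call,
   wts W >= rts T.  Thus every version of R above vR is at least rts T: this is the invariant
   reads_current, which is inductive together with auxiliary invariants on phases, sleeps and
   locks. *)

lemma get_ts_sleep_elapsed:
  fixes c :: "real \<Rightarrow> real"
  assumes rate: "\<forall>t1 t2. t1 \<le> t2 \<longrightarrow> c t2 - c t1 \<le> (1 + eps) * (t2 - t1)"
    and "0 \<le> eps" and "L \<le> t0" and "t0 \<le> t"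
    and slept: "c t0 + (U - L) * (1 + eps) \<le> c t"
  shows "U \<le> t"
proof -
  have "(U - L) * (1 + eps) \<le> (1 + eps) * (t - t0)"
    using slept rate \<open>t0 \<le> t\<close> by fastforce
  then have "U - L \<le> t - t0"
    using \<open>0 \<le> eps\<close> by (simp add: mult.commute)
  then show ?thesis
    using \<open>L \<le> t0\<close> by linarith
qed

fun wts_of :: "phase \<Rightarrow> real option" where
  "wts_of (SleepW _ wts _) = Some wts"
| "wts_of (Validating _ wts) = Some wts"
| "wts_of _ = None"

definition unstarted_fresh :: "('t, 'o) st \<Rightarrow> bool" where
  "unstarted_fresh s \<longleftrightarrow>
     (\<forall>T. ph s T = NotStarted \<longrightarrow> rts_of s T = None \<and> (\<forall>x. rd s T x = None))"

definition read_sleep_sound :: "('m \<Rightarrow> real \<Rightarrow> real) \<Rightarrow> ('t \<Rightarrow> 'm) \<Rightarrow> ('t, 'o) st \<Rightarrow> bool" where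
  "read_sleep_sound clk mach s \<longleftrightarrow>
     (\<forall>T rts dl. ph s T = SleepR rts dl \<longrightarrow>
        rts_of s T = Some rts \<and> (\<forall>x. rd s T x = None) \<and>
        (\<forall>t. now s \<le> t \<longrightarrow> dl \<le> clk (mach T) t \<longrightarrow> rts \<le> t))"

definition reading_rts_past :: "('t, 'o) st \<Rightarrow> bool" where
  "reading_rts_past s \<longleftrightarrow>
     (\<forall>T rts. ph s T = Reading rts \<longrightarrow> rts_of s T = Some rts \<and> rts \<le> now s)"

definition reads_current :: "('t, 'o) st \<Rightarrow> bool" where
  "reads_current s \<longleftrightarrow>
     (\<forall>T x v. rd s T x = Some v \<longrightarrow>
        (\<exists>rts. rts_of s T = Some rts \<and> rts \<le> now s \<and> (\<forall>w\<in>vers s x. v < w \<longrightarrow> rts \<le> w)))"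

definition writers_hold_locks :: "('t \<Rightarrow> 'o set) \<Rightarrow> ('t, 'o) st \<Rightarrow> bool" where
  "writers_hold_locks WS s \<longleftrightarrow>
     (\<forall>W. wts_of (ph s W) \<noteq> None \<longrightarrow> (\<forall>x\<in>WS W. owner s x = Some W))"

definition locked_reads_precede_wts :: "('t, 'o) st \<Rightarrow> bool" where
  "locked_reads_precede_wts s \<longleftrightarrow>
     (\<forall>W x T v rts wts. owner s x = Some W \<longrightarrow> rd s T x = Some v \<longrightarrow> rts_of s T = Some rts \<longrightarrow>
        wts_of (ph s W) = Some wts \<longrightarrow> rts \<le> wts)"

lemma unstarted_fresh_step:
  assumes "step eps clk mach RS WS s s'" and "unstarted_fresh s"
  shows "unstarted_fresh s'"
  using assms by (induction rule: step.induct) (auto simp: unstarted_fresh_def)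

lemma read_sleep_sound_step:
  assumes "0 \<le> eps"
    and rate: "\<forall>m t1 t2. t1 \<le> t2 \<longrightarrow> clk m t2 - clk m t1 \<le> (1 + eps) * (t2 - t1)"
    and "step eps clk mach RS WS s s'" and "unstarted_fresh s" and "read_sleep_sound clk mach s"
  shows "read_sleep_sound clk mach s'"
  using assms(3-)
proof (induction rule: step.induct)
  case (start s T L U)
  have "U \<le> t" if "now s \<le> t" "clk (mach T) (now s) + (U - L) * (1 + eps) \<le> clk (mach T) t" for t
    using get_ts_sleep_elapsed[of "clk (mach T)"] rate \<open>0 \<le> eps\<close> start.hyps that by blast
  with start.hyps start.prems show ?case
    by (auto simp: unstarted_fresh_def read_sleep_sound_def)
qed (auto simp: read_sleep_sound_def)

lemma reading_rts_past_step:
  assumes "step eps clk mach RS WS s s'" and "read_sleep_sound clk mach s" and "reading_rts_past s"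
  shows "reading_rts_past s'"
  using assms
proof (induction rule: step.induct)
  case (tick t s)
  then show ?case
    unfolding reading_rts_past_def by (simp; meson order_trans)
next
  case (wakeR s T rts dl)
  then show ?case
    unfolding reading_rts_past_def read_sleep_sound_def by auto
qed (auto simp: read_sleep_sound_def reading_rts_past_def)

lemma writers_hold_locks_step:
  assumes "step eps clk mach RS WS s s'" and "writers_hold_locks WS s"
  shows "writers_hold_locks WS s'"
  using assms by (induction rule: step.induct) (auto simp: writers_hold_locks_def release_def)

lemma locked_reads_precede_wts_step:
  assumes "step eps clk mach RS WS s s'" and "unstarted_fresh s" and "reads_current s"
    and "locked_reads_precede_wts s"
  shows "locked_reads_precede_wts s'"
  using assms
proof (induction rule: step.induct)
  case (startW s T rts L U)
  have "r \<le> U" if "rd s T' x = Some v" and "rts_of s T' = Some r" for T' x v r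
    using startW.prems(2) startW.hyps(4) that unfolding reads_current_def by force
  with startW.prems(3) show ?case
    unfolding locked_reads_precede_wts_def by auto
qed (auto simp: unstarted_fresh_def locked_reads_precede_wts_def release_def)

lemma reads_current_step:
  assumes "step eps clk mach RS WS s s'" and "unstarted_fresh s" and "reading_rts_past s"
    and "writers_hold_locks WS s" and "locked_reads_precede_wts s" and "reads_current s"
  shows "reads_current s'"
  using assms
proof (induction rule: step.induct)
  case (tick t s)
  then show ?case
    unfolding reads_current_def by (simp; meson order_trans)
next
  case (read_ok s T rts R v)
  have "rts_of s T = Some rts \<and> rts \<le> now s"
    using read_ok.hyps(1) read_ok.prems(2) unfolding reading_rts_past_def by blast
  moreover have "rts \<le> w" if "w \<in> vers s R" and "v < w" for w
    using read_ok.hyps(7) that by force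
  ultimately show ?case
    using read_ok.prems(5) unfolding reads_current_def by (auto; force)
next
  case (commit s T rts wts)
  have "r \<le> wts" if "x \<in> WS T" and "rd s T' x = Some v" and "rts_of s T' = Some r" for x T' v r
  proof -
    have "owner s x = Some T"
      using commit.hyps(1) commit.prems(3) that(1) unfolding writers_hold_locks_def by auto
    then show ?thesis
      using commit.hyps(1) commit.prems(4) that(2,3) unfolding locked_reads_precede_wts_def by force
  qed
  with commit.prems(5) show ?case
    unfolding reads_current_def by (auto; force)
qed (auto simp: unstarted_fresh_def reads_current_def)

definition protocol_inv :: "('m \<Rightarrow> real \<Rightarrow> real) \<Rightarrow> ('t \<Rightarrow> 'm) \<Rightarrow> ('t \<Rightarrow> 'o set) \<Rightarrow> ('t, 'o) st \<Rightarrow> bool"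
  where
  "protocol_inv clk mach WS s \<longleftrightarrow>
     unstarted_fresh s \<and> read_sleep_sound clk mach s \<and> reading_rts_past s \<and>
     writers_hold_locks WS s \<and> locked_reads_precede_wts s \<and> reads_current s"

lemma protocol_inv_init: "init_st s \<Longrightarrow> protocol_inv clk mach WS s"
  by (auto simp: init_st_def protocol_inv_def unstarted_fresh_def read_sleep_sound_def
      reading_rts_past_def writers_hold_locks_def locked_reads_precede_wts_def reads_current_def)

lemma protocol_inv_step:
  assumes "0 \<le> eps"
    and "\<forall>m t1 t2. t1 \<le> t2 \<longrightarrow> clk m t2 - clk m t1 \<le> (1 + eps) * (t2 - t1)"
    and "step eps clk mach RS WS s s'" and "protocol_inv clk mach WS s"
  shows "protocol_inv clk mach WS s'"
  using assms unfolding protocol_inv_def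
  by (meson unstarted_fresh_step read_sleep_sound_step reading_rts_past_step
      writers_hold_locks_step locked_reads_precede_wts_step reads_current_step)

lemma reachable_reads_current:
  assumes "0 \<le> eps"
    and "\<forall>m t1 t2. t1 \<le> t2 \<longrightarrow> clk m t2 - clk m t1 \<le> (1 + eps) * (t2 - t1)"
    and "reachable eps clk mach RS WS s"
  shows "reads_current s"
proof -
  obtain s0 where init: "init_st s0" and run: "(step eps clk mach RS WS)\<^sup>*\<^sup>* s0 s"
    using assms(3) unfolding reachable_def by blast
  from run have "protocol_inv clk mach WS s"
    by (induction rule: rtranclp_induct)
      (auto intro: protocol_inv_init[OF init] protocol_inv_step[OF assms(1,2)])
  then show ?thesis
    unfolding protocol_inv_def by blast
qed

theorem lemma2:
  fixes eps :: real and clk :: "'m \<Rightarrow> real \<Rightarrow> real" and mach :: "'t \<Rightarrow> 'm"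
    and RS WS :: "'t \<Rightarrow> 'o set" and s :: "('t, 'o) st"
  assumes "0 \<le> eps"
    and "\<forall>m t1 t2. t1 \<le> t2 \<longrightarrow>
           (1 - eps) * (t2 - t1) \<le> clk m t2 - clk m t1 \<and> clk m t2 - clk m t1 \<le> (1 + eps) * (t2 - t1)"
    and "\<forall>T. finite (RS T) \<and> finite (WS T)"
    and "reachable eps clk mach RS WS s"
    and "rts_of s T = Some rts" and "R \<in> RS T" and "rd s T R = Some vR" and "vR \<le> rts"
  shows "\<not> (\<exists>w\<in>vers s R. vR < w \<and> w < rts)"
proof -
  have "reads_current s"
    using reachable_reads_current[OF assms(1) _ assms(4)] assms(2) by blast
  then show ?thesis
    using assms(5,7) unfolding reads_current_def by fastforce
qed

end
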